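(* Over a field of characteristic $0$, write $[a,b]=ab-ba$ and $\{a,b\}=ab+ba$. An algebra is left-symmetric and satisfies $(ab)c+(ba)c+(ac)b+(ca)b+(bc)a+(cb)a=0$ if and only if, in terms of $[\cdot,\cdot]$ and $\{\cdot,\cdot\}$, it satisfies \[ [[a,b],c]+[[b,c],a]+[[c,a],b]=0, \] \[ \{\{a,b\},c\}=-\{[a,b],c\}-2\{[a,c],b\}+[\{a,b\},c]-[[a,c],b]+\{a,\{b,c\}\}-\{a,[b,c]\}+[a,\{b,c\}], \] and \[ \{a,\{b,c\}\}=\{[a,b],c\}+\{[a,c],b\}-\tfrac32[\{a,b\},c]-\tfrac32[\{a,c\},b]+\tfrac32[[a,c],b]-\tfrac13[a,\{b,c\}]+\tfrac13[a,[b,c]]. \]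
   Context: A left-symmetric algebra is an algebra whose associator $(a,b,c)=(ab)c-a(bc)$ satisfies $(a,b,c)=(b,a,c)$. The statement is the polarization (Markl–Remm) of this variety. *)

theory Defs
  imports Complex_Main
begin

definition bilinear_mult :: "('k::field \<Rightarrow> 'v::ab_group_add \<Rightarrow> 'v) \<Rightarrow> ('v \<Rightarrow> 'v \<Rightarrow> 'v) \<Rightarrow> bool" where
  "bilinear_mult s m \<longleftrightarrow>
     (\<forall>x y z. m (x + y) z = m x z + m y z) \<and>
     (\<forall>x y z. m x (y + z) = m x y + m x z) \<and>
     (\<forall>c x y. m (s c x) y = s c (m x y)) \<and>
     (\<forall>c x y. m x (s c y) = s c (m x y))"

definition assoc :: "('v \<Rightarrow> 'v \<Rightarrow> 'v) \<Rightarrow> 'v \<Rightarrow> 'v \<Rightarrow> 'v \<Rightarrow> 'v::ab_group_add" where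
  "assoc m a b c = m (m a b) c - m a (m b c)"

definition left_symmetric :: "('v \<Rightarrow> 'v \<Rightarrow> 'v::ab_group_add) \<Rightarrow> bool" where
  "left_symmetric m \<longleftrightarrow> (\<forall>a b c. assoc m a b c = assoc m b a c)"

definition comm :: "('v \<Rightarrow> 'v \<Rightarrow> 'v::ab_group_add) \<Rightarrow> 'v \<Rightarrow> 'v \<Rightarrow> 'v" where
  "comm m a b = m a b - m b a"

definition acomm :: "('v \<Rightarrow> 'v \<Rightarrow> 'v::ab_group_add) \<Rightarrow> 'v \<Rightarrow> 'v \<Rightarrow> 'v" where
  "acomm m a b = m a b + m b a"

end

theory Submission
  imports Defs
begin

(* Write L(a,b,c) = (a,b,c) - (b,a,c) for the left-symmetry defect and S(a,b,c) for the sum of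
   (xy)z over the six orderings of a, b, c. Expanding [,] and {,} by biadditivity, the Jacobiator
   of [,] and the differences of the two sides of the other two identities are linear
   combinations of L and S at permuted arguments, with coefficients in Z[1/3]; conversely,
   4 L(a,b,c) and 2 S(a,b,c) are integer combinations of those three differences (using
   L(b,a,c) = - L(a,b,c)). In characteristic 0 the factors 2, 3 and 4 can be cancelled, so
   both systems of identities have the same solutions. *)

locale biadditive =
  fixes m :: "'v::ab_group_add \<Rightarrow> 'v \<Rightarrow> 'v"
  assumes add_left: "m (x + y) z = m x z + m y z"
    and add_right: "m x (y + z) = m x y + m x z"
begin

lemma minus_left: "m (- x) z = - m x z"
  and diff_left: "m (x - y) z = m x z - m y z"
proof -
  interpret additive "\<lambda>x. m x z" by standard (rule add_left)
  show "m (- x) z = - m x z" "m (x - y) z = m x z - m y z" by (rule minus, rule diff)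
qed

lemma minus_right: "m x (- y) = - m x y"
  and diff_right: "m x (y - z) = m x y - m x z"
proof -
  interpret additive "m x" by standard (rule add_right)
  show "m x (- y) = - m x y" "m x (y - z) = m x y - m x z" by (rule minus, rule diff)
qed

lemmas distribs = add_left add_right minus_left minus_right diff_left diff_right

end

lemma biadditive_if_bilinear_mult: "bilinear_mult s m \<Longrightarrow> biadditive m"
  unfolding bilinear_mult_def by unfold_locales auto

definition jacobiator ::
    "('v \<Rightarrow> 'v \<Rightarrow> 'v::ab_group_add) \<Rightarrow> 'v \<Rightarrow> 'v \<Rightarrow> 'v \<Rightarrow> 'v" where
  "jacobiator f a b c = f (f a b) c + f (f b c) a + f (f c a) b"

definition left_symmetry_defect ::
    "('v \<Rightarrow> 'v \<Rightarrow> 'v::ab_group_add) \<Rightarrow> 'v \<Rightarrow> 'v \<Rightarrow> 'v \<Rightarrow> 'v" where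
  "left_symmetry_defect m a b c = assoc m a b c - assoc m b a c"

definition symmetrized_product ::
    "('v \<Rightarrow> 'v \<Rightarrow> 'v::ab_group_add) \<Rightarrow> 'v \<Rightarrow> 'v \<Rightarrow> 'v \<Rightarrow> 'v" where
  "symmetrized_product m a b c =
     m (m a b) c + m (m b a) c + m (m a c) b + m (m c a) b + m (m b c) a + m (m c b) a"

definition left_nested_acomm_defect ::
    "('k::field \<Rightarrow> 'v \<Rightarrow> 'v) \<Rightarrow> ('v \<Rightarrow> 'v \<Rightarrow> 'v::ab_group_add)
      \<Rightarrow> 'v \<Rightarrow> 'v \<Rightarrow> 'v \<Rightarrow> 'v" where
  "left_nested_acomm_defect scale m a b c = acomm m (acomm m a b) c -
     (- acomm m (comm m a b) c - scale 2 (acomm m (comm m a c) b)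
      + comm m (acomm m a b) c - comm m (comm m a c) b
      + acomm m a (acomm m b c) - acomm m a (comm m b c) + comm m a (acomm m b c))"

definition right_nested_acomm_defect ::
    "('k::field \<Rightarrow> 'v \<Rightarrow> 'v) \<Rightarrow> ('v \<Rightarrow> 'v \<Rightarrow> 'v::ab_group_add)
      \<Rightarrow> 'v \<Rightarrow> 'v \<Rightarrow> 'v \<Rightarrow> 'v" where
  "right_nested_acomm_defect scale m a b c = acomm m a (acomm m b c) -
     (acomm m (comm m a b) c + acomm m (comm m a c) b
      - scale (2/3) (comm m (acomm m a b) c) - scale (2/3) (comm m (acomm m a c) b)
      + scale (2/3) (comm m (comm m a c) b)
      - scale (1/3) (comm m a (acomm m b c)) + scale (1/3) (comm m a (comm m b c)))"

lemma (in module) scale_numeral_unfold: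
  "scale 2 x = x + x" "scale 3 x = x + x + x" "scale 4 x = x + x + x + x"
  "scale 5 x = x + x + x + x + x"
proof -
  show two: "scale 2 x = x + x"
    using scale_left_distrib[of 1 1 x] by (simp add: one_add_one)
  show three: "scale 3 x = x + x + x"
    using scale_left_distrib[of 2 1 x] two by simp
  show four: "scale 4 x = x + x + x + x"
    using scale_left_distrib[of 3 1 x] three by simp
  show "scale 5 x = x + x + x + x + x"
    using scale_left_distrib[of 4 1 x] four by simp
qed

context biadditive
begin

lemma left_symmetry_defect_swap:
  "left_symmetry_defect m b a c = - left_symmetry_defect m a b c"
  unfolding left_symmetry_defect_def by simp

lemma jacobiator_comm:
  "jacobiator (comm m) a b c =
     left_symmetry_defect m a b c - left_symmetry_defect m a c b + left_symmetry_defect m b c a"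
  unfolding jacobiator_def left_symmetry_defect_def assoc_def comm_def
  by (simp add: distribs algebra_simps)

lemma left_nested_acomm_defect_eq:
  assumes "vector_space scale"
  shows "left_nested_acomm_defect scale m a b c =
     left_symmetry_defect m a b c + scale 3 (left_symmetry_defect m a c b)
     + left_symmetry_defect m b c a"
proof -
  interpret vector_space scale by fact
  show ?thesis
    unfolding left_nested_acomm_defect_def left_symmetry_defect_def assoc_def comm_def acomm_def
    by (simp add: distribs algebra_simps scale_numeral_unfold)
qed

lemma right_nested_acomm_defect_eq:
  assumes "vector_space (scale :: 'k::field_char_0 \<Rightarrow> 'v \<Rightarrow> 'v)"
  shows "scale 3 (right_nested_acomm_defect scale m a b c) =
     scale 2 (symmetrized_product m a b c) + left_symmetry_defect m b c a
     - scale 3 (left_symmetry_defect m a b c) - scale 5 (left_symmetry_defect m a c b)"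
proof -
  interpret vector_space scale by fact
  show ?thesis
    unfolding right_nested_acomm_defect_def symmetrized_product_def left_symmetry_defect_def
      assoc_def comm_def acomm_def
    by (simp add: distribs algebra_simps scale_numeral_unfold)
qed

lemma left_symmetry_defect_eq:
  assumes "vector_space scale"
  shows "scale 4 (left_symmetry_defect m a b c) =
     jacobiator (comm m) a b c + left_nested_acomm_defect scale m a c b"
proof -
  interpret vector_space scale by fact
  show ?thesis
    by (simp add: jacobiator_comm left_nested_acomm_defect_eq[OF assms]
        left_symmetry_defect_swap[of c b a] scale_numeral_unfold algebra_simps)
qed

lemma symmetrized_product_eq:
  assumes "vector_space (scale :: 'k::field_char_0 \<Rightarrow> 'v \<Rightarrow> 'v)"
  shows "scale 2 (symmetrized_product m a b c) =
     left_nested_acomm_defect scale m a b c + left_nested_acomm_defect scale m a c b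
     + scale 3 (right_nested_acomm_defect scale m a b c) - jacobiator (comm m) a b c"
proof -
  interpret vector_space scale by fact
  show ?thesis
    unfolding right_nested_acomm_defect_eq[OF assms]
    by (simp add: jacobiator_comm left_nested_acomm_defect_eq[OF assms]
        left_symmetry_defect_swap[of c b a] scale_numeral_unfold algebra_simps)
qed

lemma left_symmetry_defect_symmetrized_product_vanish_iff:
  assumes "vector_space (scale :: 'k::field_char_0 \<Rightarrow> 'v \<Rightarrow> 'v)"
  shows "(\<forall>a b c. left_symmetry_defect m a b c = 0)
      \<and> (\<forall>a b c. symmetrized_product m a b c = 0)
    \<longleftrightarrow> (\<forall>a b c. jacobiator (comm m) a b c = 0)
      \<and> (\<forall>a b c. left_nested_acomm_defect scale m a b c = 0)
      \<and> (\<forall>a b c. right_nested_acomm_defect scale m a b c = 0)"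
proof -
  interpret vector_space scale by fact
  show ?thesis
  proof (intro iffI conjI allI; elim conjE)
    fix a b c
    assume L: "\<forall>a b c. left_symmetry_defect m a b c = 0"
      and S: "\<forall>a b c. symmetrized_product m a b c = 0"
    show "jacobiator (comm m) a b c = 0"
      using L by (simp add: jacobiator_comm)
    show "left_nested_acomm_defect scale m a b c = 0"
      using L by (simp add: left_nested_acomm_defect_eq[OF assms])
    have "scale 3 (right_nested_acomm_defect scale m a b c) = 0"
      using L S by (simp add: right_nested_acomm_defect_eq[OF assms])
    then show "right_nested_acomm_defect scale m a b c = 0" by simp
  next
    fix a b c
    assume J: "\<forall>a b c. jacobiator (comm m) a b c = 0"
      and R2: "\<forall>a b c. left_nested_acomm_defect scale m a b c = 0"
      and R3: "\<forall>a b c. right_nested_acomm_defect scale m a b c = 0"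
    have "scale 4 (left_symmetry_defect m a b c) = 0"
      using J R2 by (simp add: left_symmetry_defect_eq[OF assms])
    then show "left_symmetry_defect m a b c = 0" by simp
    have "scale 2 (symmetrized_product m a b c) = 0"
      using J R2 R3 by (simp add: symmetrized_product_eq[OF assms])
    then show "symmetrized_product m a b c = 0" by simp
  qed
qed

end


theorem mainTheorem13:
  fixes scale :: "'k::field_char_0 \<Rightarrow> 'v::ab_group_add \<Rightarrow> 'v"
    and m :: "'v \<Rightarrow> 'v \<Rightarrow> 'v"
  assumes "vector_space scale"
    and "bilinear_mult scale m"
  shows "(left_symmetric m \<and>
          (\<forall>a b c. m (m a b) c + m (m b a) c + m (m a c) b + m (m c a) b
                     + m (m b c) a + m (m c b) a = 0))
     \<longleftrightarrow>
         ((\<forall>a b c. comm m (comm m a b) c + comm m (comm m b c) a + comm m (comm m c a) b = 0) \<and>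
          (\<forall>a b c. acomm m (acomm m a b) c =
              - acomm m (comm m a b) c - scale 2 (acomm m (comm m a c) b)
              + comm m (acomm m a b) c - comm m (comm m a c) b
              + acomm m a (acomm m b c) - acomm m a (comm m b c) + comm m a (acomm m b c)) \<and>
          (\<forall>a b c. acomm m a (acomm m b c) =
              acomm m (comm m a b) c + acomm m (comm m a c) b
              - scale (2/3) (comm m (acomm m a b) c) - scale (2/3) (comm m (acomm m a c) b)
              + scale (2/3) (comm m (comm m a c) b)
              - scale (1/3) (comm m a (acomm m b c)) + scale (1/3) (comm m a (comm m b c))))"
proof -
  interpret biadditive m using assms(2) by (rule biadditive_if_bilinear_mult)
  show ?thesis
    using left_symmetry_defect_symmetrized_product_vanish_iff[OF assms(1)]
    by (simp add: left_symmetric_def left_symmetry_defect_def symmetrized_product_def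
        jacobiator_def left_nested_acomm_defect_def right_nested_acomm_defect_def)
qed

end
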